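(* Suppose a first-order method in Algorithm Class 2 is applied to the splitting reformulation (SP) of instance $\mathcal P$ from $x^{(0)}=0$, $y^{(0)}=0$, and generates $\{(x^{(t)},y^{(t)})\}_{t\ge1}$, with $x^{(t)}=(x_1^{(t)\top},\dots,x_m^{(t)\top})^\top$, $x_i^{(t)}\in\mathbb R^{\bar d}$, and $y^{(t)}=(y_1^{(t)\top},\dots,y_{3m_2-1}^{(t)\top})^\top$, $y_j^{(t)}\in\mathbb R^{\bar d}$. Then for any $\bar j\in\{2,3,\dots,\bar d\}$, $\mathrm{supp}(x_i^{(t)})\subset\{1,\dots,\bar j-1\}$ and $\mathrm{supp}(y_j^{(t)})\subset\{1,\dots,\bar j-1\}$ for all $i=1,\dots,m$, $j=1,\dots,3m_2-1$, and all $t\le 1+m(\bar j-2)/3$.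
   Context: $\mathrm{supp}(z)=\{j:[z]_j\ne0\}$. Splitting reformulation (SP) of $\min f_0(x)+\bar g(\bar Ax+\bar b)$ s.t. $Ax+b=0$: $\min_{x,y}f_0(x)+\bar g(y)$ s.t. $Ax+b=0$, $y=\bar Ax+\bar b$. Algorithm Class 2: given $(x^{(0)},y^{(0)})$, for all $t\ge1$, $x^{(t)}\in\mathrm{span}\{x^{(s)},\nabla f_0(x^{(s)}),A^\top b,A^\top Ax^{(s)},\bar A^\top\bar b,\bar A^\top\bar Ax^{(s)},\bar A^\top y^{(s)}\}_{s=0}^{t-1}$ and $y^{(t)}\in\mathrm{span}\{\xi^{(t)},\mathrm{prox}_{\eta_t\bar g}(\xi^{(t)})\}$ with $\eta_t>0$, $\xi^{(t)}\in\mathrm{span}\{\bar b,y^{(s)},\bar A\bar A^\top y^{(s)},\bar Ax^{(s)}\}_{s=0}^{t-1}$, where $\mathrm{prox}_{\eta\bar g}(y)=\arg\min_{y'}\{\bar g(y')+\frac1{2\eta}\|y'-y\|^2\}$. Instance $\mathcal P$: fix $\epsilon\in(0,1)$, $L_f>0$, integers $m_1\ge2$, $m_2\ge1$ with $m_1m_2$ even, $m=3m_1m_2$, an odd integer $\bar d\ge5$, $d=m\bar d$. Write $x=(x_1^\top,\dots,x_m^\top)^\top$, $x_i\in\mathbb R^{\bar d}$; $[z]_j$ is the $j$-th coordinate. $J_p\in\mathbb R^{(p-1)\times p}$ has $-1$ at $(k,k)$, $1$ at $(k,k+1)$, zero elsewhere. $\mathcal M=\{im_1:i=1,\dots,3m_2-1\}$,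 $\mathcal M^C=\{1,\dots,m-1\}\setminus\mathcal M$, $\bar n=(3m_2-1)\bar d$, $\bar A=mL_f(J_{\mathcal M}\otimes I_{\bar d})$, $A=mL_f(J_{\mathcal M^C}\otimes I_{\bar d})$ with $J_{\mathcal M},J_{\mathcal M^C}$ the rows of $J_m$ indexed by $\mathcal M,\mathcal M^C$; $b=0$, $\bar b=0$. Choose $\beta>(50\pi+1+\|A\|)\sqrt m\,\epsilon$; $\bar g(y)=\frac{\beta}{mL_f}\|y\|_1$ on $\mathbb R^{\bar n}$. $\Psi(u)=0$ ($u\le0$), $1-e^{-u^2}$ ($u>0$); $\Phi(v)=4\arctan v+2\pi$. For $z\in\mathbb R^{\bar d}$: $\varphi(z,1)=-\Psi(1)\Phi([z]_1)$, $\varphi(z,j)=\Psi(-[z]_{j-1})\Phi(-[z]_j)-\Psi([z]_{j-1})\Phi([z]_j)$ ($2\le j\le\bar d$); $h_i(z)=\varphi(z,1)+3\sum_{j=1}^{\lfloor\bar d/2\rfloor}\varphi(z,2j)$ for $1\le i\le m/3$, $h_i(z)=\varphi(z,1)$ for $m/3+1\le i\le 2m/3$, $h_i(z)=\varphi(z,1)+3\sum_{j=1}^{\lfloor\bar d/2\rfloor}\varphi(z,2j+1)$ for $2m/3+1\le i\le m$. $f_i(z)=\frac{300\pi\epsilon^2}{mL_f}h_i(\frac{\sqrt mL_fz}{150\pi\epsilon})$, $f_0(x)=\sum_{i=1}^mf_i(x_i)$. Instance $\mathcal P$ is $\min_xf_0(x)+\bar g(\bar Ax)$ s.t. $Ax+b=0$.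 *)

theory Defs
  imports "HOL-Analysis.Analysis"
begin

text \<open>A vector of R^n is represented as a function v :: nat => real
 with 1-based coordinates v 1, ..., v n, and v k = 0 for k = 0 and k > n.
 A matrix with nr rows and nc columns is a function M :: nat => nat => real
 (1-based entries M r c); only entries with 1 <= r <= nr, 1 <= c <= nc matter.\<close>

definition vecs :: "nat \<Rightarrow> (nat \<Rightarrow> real) set" where
  "vecs n = {v. \<forall>k. (k = 0 \<or> n < k) \<longrightarrow> v k = 0}"

definition zvec :: "nat \<Rightarrow> real" where
  "zvec = (\<lambda>_. 0)"

definition supp :: "(nat \<Rightarrow> real) \<Rightarrow> nat set" where
  "supp z = {j. z j \<noteq> 0}"

definition lspan :: "(nat \<Rightarrow> real) set \<Rightarrow> (nat \<Rightarrow> real) set" where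
  "lspan S = {v. \<exists>F c. finite F \<and> F \<subseteq> S \<and> v = (\<lambda>k. \<Sum>u\<in>F. c u * u k)}"

definition vnorm :: "nat \<Rightarrow> (nat \<Rightarrow> real) \<Rightarrow> real" where
  "vnorm n v = sqrt (\<Sum>k=1..n. (v k)\<^sup>2)"

definition mv :: "nat \<Rightarrow> nat \<Rightarrow> (nat \<Rightarrow> nat \<Rightarrow> real) \<Rightarrow> (nat \<Rightarrow> real) \<Rightarrow> (nat \<Rightarrow> real)" where
  "mv nr nc M x = (\<lambda>r. if 1 \<le> r \<and> r \<le> nr then (\<Sum>c=1..nc. M r c * x c) else 0)"

definition tr :: "(nat \<Rightarrow> nat \<Rightarrow> real) \<Rightarrow> (nat \<Rightarrow> nat \<Rightarrow> real)" where
  "tr M = (\<lambda>r c. M c r)"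

definition opnorm :: "nat \<Rightarrow> nat \<Rightarrow> (nat \<Rightarrow> nat \<Rightarrow> real) \<Rightarrow> real" where
  "opnorm nr nc M = Sup {vnorm nr (mv nr nc M x) | x. x \<in> vecs nc \<and> vnorm nc x \<le> 1}"

definition Jmat :: "nat \<Rightarrow> nat \<Rightarrow> nat \<Rightarrow> real" where
  "Jmat p k l = (if 1 \<le> k \<and> k \<le> p - 1 \<and> 1 \<le> l \<and> l \<le> p then
       (if l = k then -1 else if l = k + 1 then 1 else 0) else 0)"

definition selrows :: "nat set \<Rightarrow> (nat \<Rightarrow> nat \<Rightarrow> real) \<Rightarrow> (nat \<Rightarrow> nat \<Rightarrow> real)" where
  "selrows S M = (\<lambda>r c. if 1 \<le> r \<and> r \<le> card S then M (sorted_list_of_set S ! (r - 1)) c else 0)"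

text \<open>Kronecker product M \<otimes> I_q\<close>
definition kronI :: "nat \<Rightarrow> (nat \<Rightarrow> nat \<Rightarrow> real) \<Rightarrow> (nat \<Rightarrow> nat \<Rightarrow> real)" where
  "kronI q M = (\<lambda>r c. if 1 \<le> r \<and> 1 \<le> c then
       M ((r - 1) div q + 1) ((c - 1) div q + 1) * (if (r - 1) mod q = (c - 1) mod q then 1 else 0)
     else 0)"

definition blk :: "nat \<Rightarrow> (nat \<Rightarrow> real) \<Rightarrow> nat \<Rightarrow> (nat \<Rightarrow> real)" where
  "blk q x i = (\<lambda>j. if 1 \<le> j \<and> j \<le> q then x ((i - 1) * q + j) else 0)"

definition grad :: "nat \<Rightarrow> ((nat \<Rightarrow> real) \<Rightarrow> real) \<Rightarrow> (nat \<Rightarrow> real) \<Rightarrow> (nat \<Rightarrow> real)" where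
  "grad n f x = (\<lambda>k. if 1 \<le> k \<and> k \<le> n then deriv (\<lambda>s. f (x(k := s))) (x k) else 0)"

definition is_prox :: "nat \<Rightarrow> real \<Rightarrow> ((nat \<Rightarrow> real) \<Rightarrow> real) \<Rightarrow> (nat \<Rightarrow> real) \<Rightarrow> (nat \<Rightarrow> real) \<Rightarrow> bool" where
  "is_prox n eta g y p \<longleftrightarrow> p \<in> vecs n \<and>
     (\<forall>y'\<in>vecs n. g p + (vnorm n (\<lambda>k. p k - y k))\<^sup>2 / (2 * eta)
                   \<le> g y' + (vnorm n (\<lambda>k. y' k - y k))\<^sup>2 / (2 * eta))"

definition Psi :: "real \<Rightarrow> real" where
  "Psi u = (if u \<le> 0 then 0 else 1 - exp (- (u\<^sup>2)))"

definition Phi :: "real \<Rightarrow> real" where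
  "Phi v = 4 * arctan v + 2 * pi"

definition varphi :: "(nat \<Rightarrow> real) \<Rightarrow> nat \<Rightarrow> real" where
  "varphi z j = (if j = 1 then - Psi 1 * Phi (z 1)
     else Psi (- z (j - 1)) * Phi (- z j) - Psi (z (j - 1)) * Phi (z j))"

definition hfun :: "nat \<Rightarrow> nat \<Rightarrow> nat \<Rightarrow> (nat \<Rightarrow> real) \<Rightarrow> real" where
  "hfun m dbar i z =
     (if 1 \<le> i \<and> i \<le> m div 3 then varphi z 1 + 3 * (\<Sum>j=1..dbar div 2. varphi z (2 * j))
      else if m div 3 + 1 \<le> i \<and> i \<le> 2 * m div 3 then varphi z 1
      else varphi z 1 + 3 * (\<Sum>j=1..dbar div 2. varphi z (2 * j + 1)))"

definition ffun :: "real \<Rightarrow> real \<Rightarrow> nat \<Rightarrow> nat \<Rightarrow> nat \<Rightarrow> (nat \<Rightarrow> real) \<Rightarrow> real" where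
  "ffun eps Lf m dbar i z =
     300 * pi * eps\<^sup>2 / (real m * Lf) *
     hfun m dbar i (\<lambda>k. sqrt (real m) * Lf * z k / (150 * pi * eps))"

definition f0 :: "real \<Rightarrow> real \<Rightarrow> nat \<Rightarrow> nat \<Rightarrow> (nat \<Rightarrow> real) \<Rightarrow> real" where
  "f0 eps Lf m dbar x = (\<Sum>i=1..m. ffun eps Lf m dbar i (blk dbar x i))"

definition Mset :: "nat \<Rightarrow> nat \<Rightarrow> nat set" where
  "Mset m1 m2 = {i * m1 | i. 1 \<le> i \<and> i \<le> 3 * m2 - 1}"

definition McSet :: "nat \<Rightarrow> nat \<Rightarrow> nat set" where
  "McSet m1 m2 = {1..3 * m1 * m2 - 1} - Mset m1 m2"

text \<open>Abar = m Lf (J_M \<otimes> I_dbar), with (3 m2 - 1) dbar rows and m dbar columns\<close>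
definition Abar :: "real \<Rightarrow> nat \<Rightarrow> nat \<Rightarrow> nat \<Rightarrow> (nat \<Rightarrow> nat \<Rightarrow> real)" where
  "Abar Lf m1 m2 dbar = (\<lambda>r c. real (3 * m1 * m2) * Lf *
       kronI dbar (selrows (Mset m1 m2) (Jmat (3 * m1 * m2))) r c)"

text \<open>A = m Lf (J_{M^C} \<otimes> I_dbar), with card(M^C) dbar rows and m dbar columns\<close>
definition Amat :: "real \<Rightarrow> nat \<Rightarrow> nat \<Rightarrow> nat \<Rightarrow> (nat \<Rightarrow> nat \<Rightarrow> real)" where
  "Amat Lf m1 m2 dbar = (\<lambda>r c. real (3 * m1 * m2) * Lf *
       kronI dbar (selrows (McSet m1 m2) (Jmat (3 * m1 * m2))) r c)"

definition gbar :: "real \<Rightarrow> real \<Rightarrow> nat \<Rightarrow> nat \<Rightarrow> (nat \<Rightarrow> real) \<Rightarrow> real" where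
  "gbar beta Lf m nbar y = beta / (real m * Lf) * (\<Sum>k=1..nbar. \<bar>y k\<bar>)"

end

theory Submission
  imports Defs "HOL-Real_Asymp.Real_Asymp"
begin

(*
  Say that block i of a vector is at level K if it is supported on its first K
  coordinates. Each h_i is a zero-chain: at a point whose i-th block is at level K,
  the partial derivative of f_0 in coordinate K + 1 of block i vanishes, unless h_i
  contains the link varphi(., K + 1), which happens only in the first third of the
  blocks for even K + 1 and only in the last third for odd K + 1 (Psi vanishes to
  second order at 0). All other operations of Class 2 spread support by at most one
  block along the chain 1, ..., m per iteration: A^T A and Abar^T Abar couple
  neighbouring blocks, Abar and Abar^T couple y-block j with x-blocks j m1 and
  j m1 + 1, and the prox of a nonnegative multiple of the l1-norm keeps zero
  coordinates. So a newly created coordinate needs m/3 iterations to cross the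
  middle third before the next one can be created on the other side; hence every
  block is still at level K at iteration 1 + (K - 1) m/3.
*)

lemma Psi_0 [simp]: "Psi 0 = 0"
  by (simp add: Psi_def)

lemma Psi_has_real_derivative_0: "(Psi has_real_derivative 0) (at 0)"
proof -
  have left: "((\<lambda>y. (Psi y - Psi 0) / (y - 0)) \<longlongrightarrow> 0) (at_left 0)"
  proof (rule tendsto_eventually)
    show "\<forall>\<^sub>F y in at_left 0. (Psi y - Psi 0) / (y - 0) = (0::real)"
      unfolding eventually_at_left_field by (rule exI[of _ "-1"]) (auto simp: Psi_def)
  qed
  have "((\<lambda>y::real. (1 - exp (- (y\<^sup>2))) / y) \<longlongrightarrow> 0) (at_right 0)"
    by real_asymp
  then have right: "((\<lambda>y. (Psi y - Psi 0) / (y - 0)) \<longlongrightarrow> 0) (at_right 0)"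
  proof (rule Lim_transform_eventually)
    show "\<forall>\<^sub>F y in at_right 0. (1 - exp (- (y\<^sup>2))) / y = (Psi y - Psi 0) / (y - 0)"
      unfolding eventually_at_right_field by (rule exI[of _ 1]) (auto simp: Psi_def)
  qed
  show ?thesis
    unfolding has_field_derivative_iff filterlim_at_split using left right by simp
qed

text \<open>Block \<open>i\<close> of \<open>f\<^sub>0\<close> can create coordinate \<open>j\<close> out of coordinate \<open>j - 1\<close> only if
  \<open>has_link m i j\<close>: otherwise \<open>h\<^sub>i\<close> has no term \<open>varphi(., j)\<close>.\<close>

definition has_link :: "nat \<Rightarrow> nat \<Rightarrow> nat \<Rightarrow> bool" where
  "has_link m i j \<longleftrightarrow> (even j \<and> i \<le> m div 3) \<or> (odd j \<and> 2 * m div 3 < i)"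

lemma varphi_upd_has_derivative_0:
  fixes u :: "nat \<Rightarrow> real"
  assumes u: "\<And>k. K < k \<Longrightarrow> u k = 0" and jj: "2 \<le> jj" "K < jj"
    and no_link: "j = jj \<Longrightarrow> jj \<noteq> Suc K"
  shows "((\<lambda>s. varphi (u(jj := s)) j) has_real_derivative 0) (at 0)"
proof -
  consider (other) "j \<noteq> jj" "j \<noteq> Suc jj" | (succ) "j = Suc jj" | (same) "j = jj"
    by blast
  then show ?thesis
  proof cases
    case other
    with jj have "j - 1 \<noteq> jj" by auto
    with other jj have "(\<lambda>s. varphi (u(jj := s)) j) = (\<lambda>s. varphi u j)"
      by (auto simp: varphi_def)
    then show ?thesis by simp
  next
    case succ
    with u jj have "(\<lambda>s. varphi (u(jj := s)) j) = (\<lambda>s. Psi (- s) * Phi 0 - Psi s * Phi 0)"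
      by (auto simp: varphi_def)
    moreover have "((\<lambda>s. Psi (- s) * Phi 0 - Psi s * Phi 0) has_real_derivative 0) (at 0)"
      using DERIV_mirror[of Psi 0 0] Psi_has_real_derivative_0
      by (auto intro!: derivative_eq_intros)
    ultimately show ?thesis by simp
  next
    case same
    with u jj no_link have "u (jj - 1) = 0" "jj - 1 \<noteq> jj" by auto
    with same jj have "(\<lambda>s. varphi (u(jj := s)) j) = (\<lambda>s. 0)"
      by (auto simp: varphi_def)
    then show ?thesis by simp
  qed
qed

lemma hfun_upd_has_derivative_0:
  fixes u :: "nat \<Rightarrow> real"
  assumes u: "\<And>k. K < k \<Longrightarrow> u k = 0" and jj: "2 \<le> jj" "K < jj" and i: "1 \<le> i"
    and no_link: "jj = Suc K \<Longrightarrow> \<not> has_link m i jj"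
  shows "((\<lambda>s. hfun m dbar i (u(jj := s))) has_real_derivative 0) (at 0)"
proof -
  have terms: "((\<lambda>s. varphi (u(jj := s)) 1 + 3 * (\<Sum>l\<in>L. varphi (u(jj := s)) (g l)))
      has_real_derivative 0) (at 0)"
    if "\<And>l. l \<in> L \<Longrightarrow> g l = jj \<Longrightarrow> jj \<noteq> Suc K" for L and g :: "nat \<Rightarrow> nat"
  proof -
    have "((\<lambda>s. varphi (u(jj := s)) 1 + 3 * (\<Sum>l\<in>L. varphi (u(jj := s)) (g l)))
        has_real_derivative 0 + 3 * (\<Sum>l\<in>L. 0)) (at 0)"
      by (intro DERIV_add DERIV_cmult DERIV_sum varphi_upd_has_derivative_0[OF u jj])
        (use that jj in auto)
    then show ?thesis by simp
  qed
  consider (first) "i \<le> m div 3" | (middle) "m div 3 < i" "i \<le> 2 * m div 3"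
    | (last) "2 * m div 3 < i" by linarith
  then show ?thesis
  proof cases
    case first
    with no_link have "2 * l = jj \<Longrightarrow> jj \<noteq> Suc K" for l
      by (auto simp: has_link_def) presburger
    with first i show ?thesis
      using terms[of "{1..dbar div 2}" "\<lambda>l. 2 * l"] by (simp add: hfun_def)
  next
    case middle
    then show ?thesis
      using terms[of "{}"] by (simp add: hfun_def)
  next
    case last
    with no_link have "2 * l + 1 = jj \<Longrightarrow> jj \<noteq> Suc K" for l
      by (auto simp: has_link_def)
    moreover have "m div 3 \<le> 2 * m div 3" by (simp add: div_le_mono)
    ultimately show ?thesis using last
      using terms[of "{1..dbar div 2}" "\<lambda>l. 2 * l + 1"] by (simp add: hfun_def)
  qed
qed

lemma blk_index_div_mod:
  fixes a q j :: nat
  assumes "1 \<le> j" "j \<le> q"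
  shows "(a * q + j - 1) div q = a" "(a * q + j - 1) mod q = j - 1"
proof -
  have "a * q + j - 1 = a * q + (j - 1)" using assms by simp
  moreover have "j - 1 < q" using assms by simp
  ultimately show "(a * q + j - 1) div q = a" "(a * q + j - 1) mod q = j - 1" by simp_all
qed

lemma blk_upd_same:
  assumes "1 \<le> j" "j \<le> q"
  shows "blk q (v((i - 1) * q + j := s)) i = (blk q v i)(j := s)"
  using assms by (auto simp: blk_def)

lemma blk_upd_other:
  assumes "1 \<le> i" "1 \<le> i'" "i' \<noteq> i" "1 \<le> j" "j \<le> q"
  shows "blk q (v((i - 1) * q + j := s)) i' = blk q v i'"
proof -
  have "(i' - 1) * q + k \<noteq> (i - 1) * q + j" if "1 \<le> k" "k \<le> q" for k
    using blk_index_div_mod(1)[OF that, of "i' - 1"] blk_index_div_mod(1)[OF assms(4,5), of "i - 1"]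
      assms by auto
  then show ?thesis by (auto simp: blk_def)
qed

definition blk_supp_le :: "nat \<Rightarrow> (nat \<Rightarrow> real) \<Rightarrow> nat \<Rightarrow> nat \<Rightarrow> bool" where
  "blk_supp_le q v i K \<longleftrightarrow> (\<forall>j. 1 \<le> j \<and> j \<le> q \<and> K < j \<longrightarrow> v ((i - 1) * q + j) = 0)"

lemma supp_blk_subset_iff: "supp (blk q v i) \<subseteq> {1..K} \<longleftrightarrow> blk_supp_le q v i K"
  by (auto simp: supp_def blk_def blk_supp_le_def not_less)

lemma blk_supp_leD: "blk_supp_le q v i K \<Longrightarrow> K < j \<Longrightarrow> blk q v i j = 0"
  by (simp add: blk_supp_le_def blk_def)

lemma ffun_upd_has_derivative_0:
  fixes w :: "nat \<Rightarrow> real"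
  assumes w: "\<And>k. K < k \<Longrightarrow> w k = 0" and jj: "2 \<le> jj" "K < jj" and i: "1 \<le> i"
    and no_link: "jj = Suc K \<Longrightarrow> \<not> has_link m i jj"
  shows "((\<lambda>s. ffun eps Lf m dbar i (w(jj := s))) has_real_derivative 0) (at 0)"
proof -
  define c where "c = sqrt (real m) * Lf / (150 * pi * eps)"
  define u where "u k = c * w k" for k
  have scaled: "(\<lambda>k. sqrt (real m) * Lf * (w(jj := s)) k / (150 * pi * eps)) = u(jj := c * s)" for s
    by (auto simp: u_def c_def)
  have "((\<lambda>s. hfun m dbar i (u(jj := s))) has_real_derivative 0) (at (c * 0))"
    using hfun_upd_has_derivative_0[of K u, OF _ jj i no_link] w by (simp add: u_def)
  then have "((\<lambda>s. hfun m dbar i (u(jj := c * s))) has_real_derivative 0 * c) (at 0)"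
    by (rule DERIV_chain2) (auto intro!: derivative_eq_intros)
  then have "((\<lambda>s. 300 * pi * eps\<^sup>2 / (real m * Lf) * hfun m dbar i (u(jj := c * s)))
      has_real_derivative 300 * pi * eps\<^sup>2 / (real m * Lf) * (0 * c)) (at 0)"
    by (rule DERIV_cmult)
  then show ?thesis unfolding ffun_def scaled by simp
qed

lemma grad_f0_eq_0:
  assumes d: "d = m * dbar" and i: "i \<in> {1..m}" and v: "blk_supp_le dbar v i K"
    and jj: "2 \<le> jj" "jj \<le> dbar" "K < jj" and no_link: "jj = Suc K \<Longrightarrow> \<not> has_link m i jj"
  shows "grad d (f0 eps Lf m dbar) v ((i - 1) * dbar + jj) = 0"
proof -
  define k where "k = (i - 1) * dbar + jj"
  have "k \<le> (i - 1) * dbar + dbar" using jj by (simp add: k_def)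
  also have "\<dots> = i * dbar" using i by (cases i) auto
  also have "\<dots> \<le> d" using i d by simp
  finally have k: "1 \<le> k" "k \<le> d" using jj by (auto simp: k_def)
  have "((\<lambda>s. ffun eps Lf m dbar i' (blk dbar (v(k := s)) i')) has_real_derivative 0) (at 0)"
    if i': "i' \<in> {1..m}" for i'
  proof (cases "i' = i")
    case True
    have "blk dbar (v(k := s)) i = (blk dbar v i)(jj := s)" for s
      unfolding k_def by (rule blk_upd_same) (use jj in auto)
    then show ?thesis
      using ffun_upd_has_derivative_0[of K "blk dbar v i", OF _ jj(1,3) _ no_link] True i
        blk_supp_leD[OF v] by simp
  next
    case False
    have "blk dbar (v(k := s)) i' = blk dbar v i'" for s
      unfolding k_def by (rule blk_upd_other) (use False i i' jj in auto)
    then show ?thesis by simp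
  qed
  then have "((\<lambda>s. f0 eps Lf m dbar (v(k := s))) has_real_derivative (\<Sum>i'\<in>{1..m}. 0)) (at 0)"
    unfolding f0_def by (rule DERIV_sum)
  moreover have "v k = 0" using v jj by (simp add: blk_supp_le_def k_def)
  ultimately show ?thesis
    unfolding grad_def k_def[symmetric] using k by (simp add: DERIV_imp_deriv)
qed

lemma blk_supp_le_grad_f0:
  assumes d: "d = m * dbar" and i: "i \<in> {1..m}" and K: "1 \<le> K"
    and v: "blk_supp_le dbar v i K" and link: "has_link m i (Suc K) \<Longrightarrow> blk_supp_le dbar v i (K - 1)"
  shows "blk_supp_le dbar (grad d (f0 eps Lf m dbar) v) i K"
  unfolding blk_supp_le_def
proof (intro allI impI)
  fix jj assume jj: "1 \<le> jj \<and> jj \<le> dbar \<and> K < jj"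
  show "grad d (f0 eps Lf m dbar) v ((i - 1) * dbar + jj) = 0"
  proof (cases "has_link m i (Suc K)")
    case True
    with K jj show ?thesis by (intro grad_f0_eq_0[OF d i link]) auto
  next
    case False
    with K jj show ?thesis by (intro grad_f0_eq_0[OF d i v]) auto
  qed
qed

lemma lspan_eq_0: "v \<in> lspan S \<Longrightarrow> (\<And>u. u \<in> S \<Longrightarrow> u k = 0) \<Longrightarrow> v k = 0"
  unfolding lspan_def by (auto intro!: sum.neutral)

lemma blk_supp_le_lspan:
  "v \<in> lspan S \<Longrightarrow> (\<And>u. u \<in> S \<Longrightarrow> blk_supp_le q u i K) \<Longrightarrow> blk_supp_le q v i K"
  unfolding blk_supp_le_def by (blast intro: lspan_eq_0)

lemma blk_supp_le_zvec [simp]: "blk_supp_le q zvec i K"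
  by (simp add: blk_supp_le_def zvec_def)

lemma mv_zvec [simp]: "mv nr nc M zvec = zvec"
  by (auto simp: mv_def zvec_def)

lemma blk_supp_le_mv_kronI:
  assumes rb: "1 \<le> rb" and cols: "\<And>cb. 1 \<le> cb \<Longrightarrow> N rb cb \<noteq> 0 \<Longrightarrow> blk_supp_le q x cb K"
  shows "blk_supp_le q (mv nr nc (\<lambda>r c. a * kronI q N r c) x) rb K"
  unfolding blk_supp_le_def
proof (intro allI impI)
  fix j assume j: "1 \<le> j \<and> j \<le> q \<and> K < j"
  let ?r = "(rb - 1) * q + j"
  have summand_0: "a * kronI q N ?r c * x c = 0" for c
  proof (cases "(c - 1) mod q = j - 1 \<and> N rb ((c - 1) div q + 1) \<noteq> 0")
    case True
    define cb where "cb = (c - 1) div q + 1"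
    have "c - 1 = (cb - 1) * q + (j - 1)"
      using True div_mult_mod_eq[of "c - 1" q] by (simp add: cb_def)
    then have "c = 0 \<or> c = (cb - 1) * q + j" using j by auto
    moreover have "blk_supp_le q x cb K" using cols True by (simp add: cb_def)
    ultimately show ?thesis using j by (auto simp: kronI_def blk_supp_le_def)
  next
    case False
    then show ?thesis
      using j rb blk_index_div_mod[of j q "rb - 1"] by (auto simp: kronI_def)
  qed
  show "mv nr nc (\<lambda>r c. a * kronI q N r c) x ?r = 0"
    unfolding mv_def summand_0 by simp
qed

lemma tr_kronI: "tr (\<lambda>r c. a * kronI q N r c) = (\<lambda>r c. a * kronI q (tr N) r c)"
  by (auto simp: tr_def kronI_def intro!: ext)

lemma blk_supp_le_mv_tr_kronI:
  assumes "1 \<le> cb" and "\<And>rb. 1 \<le> rb \<Longrightarrow> N rb cb \<noteq> 0 \<Longrightarrow> blk_supp_le q y rb K"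
  shows "blk_supp_le q (mv nc nr (tr (\<lambda>r c. a * kronI q N r c)) y) cb K"
  unfolding tr_kronI using assms by (intro blk_supp_le_mv_kronI) (auto simp: tr_def)

lemma selrows_Jmat_nonzero:
  assumes "selrows S (Jmat p) r c \<noteq> 0"
  obtains k where "c = k \<or> c = k + 1" "c \<le> p" "k = sorted_list_of_set S ! (r - 1)"
    "1 \<le> r" "r \<le> card S"
  using assms by (auto simp: selrows_def Jmat_def split: if_splits)

lemma blk_supp_le_kronI_Jmat_gram:
  assumes i: "1 \<le> i"
    and near: "\<And>i'. 1 \<le> i' \<Longrightarrow> i' \<le> p \<Longrightarrow> i' \<le> i + 1 \<Longrightarrow> i \<le> i' + 1 \<Longrightarrow> blk_supp_le q x i' K"
  shows "blk_supp_le q (mv nc nr (tr (\<lambda>r c. a * kronI q (selrows S (Jmat p)) r c))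
            (mv nr nc (\<lambda>r c. a * kronI q (selrows S (Jmat p)) r c) x)) i K"
proof (rule blk_supp_le_mv_tr_kronI[OF i])
  fix rb assume rb: "1 \<le> rb" "selrows S (Jmat p) rb i \<noteq> 0"
  show "blk_supp_le q (mv nr nc (\<lambda>r c. a * kronI q (selrows S (Jmat p)) r c) x) rb K"
  proof (rule blk_supp_le_mv_kronI[OF rb(1)])
    fix i' assume "1 \<le> i'" "selrows S (Jmat p) rb i' \<noteq> 0"
    with rb(2) show "blk_supp_le q x i' K"
      by (elim selrows_Jmat_nonzero) (intro near, auto)
  qed
qed

lemma sorted_list_of_Mset:
  assumes "1 \<le> m1"
  shows "sorted_list_of_set (Mset m1 m2) = map (\<lambda>i. i * m1) [1..<3 * m2]"
proof -
  have "sorted_wrt (<) (map (\<lambda>i. i * m1) [1..<3 * m2])"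
    using assms by (auto simp: sorted_wrt_map sorted_wrt_iff_nth_less)
  then have "distinct (map (\<lambda>i. i * m1) [1..<3 * m2])" "sorted (map (\<lambda>i. i * m1) [1..<3 * m2])"
    by (simp_all add: strict_sorted_iff)
  moreover have "Mset m1 m2 = set (map (\<lambda>i. i * m1) [1..<3 * m2])"
    unfolding Mset_def by force
  ultimately show ?thesis
    by (simp only: sorted_list_of_set_sort_remdups distinct_remdups_id sorted_sort_id)
qed

lemma selrows_Mset_Jmat_nonzero:
  assumes m1: "1 \<le> m1" and nz: "selrows (Mset m1 m2) (Jmat p) r c \<noteq> 0"
  shows "r \<in> {1..3 * m2 - 1}" "c \<in> {r * m1, r * m1 + 1}"
proof -
  have "card (Mset m1 m2) = 3 * m2 - 1"
    by (metis sorted_list_of_Mset[OF m1] length_sorted_list_of_set length_map length_upt diff_Suc_1)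
  then have r: "1 \<le> r" "r \<le> 3 * m2 - 1"
    using nz by (auto elim: selrows_Jmat_nonzero)
  then show "r \<in> {1..3 * m2 - 1}" by simp
  have "[1..<3 * m2] ! (r - 1) = r"
    using r by (subst nth_upt) auto
  then have "sorted_list_of_set (Mset m1 m2) ! (r - 1) = r * m1"
    using r by (simp add: sorted_list_of_Mset[OF m1])
  with nz show "c \<in> {r * m1, r * m1 + 1}"
    by (elim selrows_Jmat_nonzero) auto
qed

lemma blk_supp_le_Abar:
  assumes "1 \<le> m1" "1 \<le> j" "\<And>i. i \<in> {j * m1, j * m1 + 1} \<Longrightarrow> blk_supp_le q x i K"
  shows "blk_supp_le q (mv nr nc (Abar Lf m1 m2 q) x) j K"
  unfolding Abar_def using assms selrows_Mset_Jmat_nonzero(2)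
  by (intro blk_supp_le_mv_kronI) blast+

lemma blk_supp_le_tr_Abar:
  assumes "1 \<le> m1" "1 \<le> i"
    and "\<And>j. j \<in> {1..3 * m2 - 1} \<Longrightarrow> i \<in> {j * m1, j * m1 + 1} \<Longrightarrow> blk_supp_le q y j K"
  shows "blk_supp_le q (mv nc nr (tr (Abar Lf m1 m2 q)) y) i K"
  unfolding Abar_def using assms selrows_Mset_Jmat_nonzero
  by (intro blk_supp_le_mv_tr_kronI) blast+

lemma mult_neq_Suc_mult:
  fixes q a b :: nat
  assumes "2 \<le> q"
  shows "a * q \<noteq> Suc (b * q)"
proof
  assume "a * q = Suc (b * q)"
  then have "(a * q) mod q = Suc (b * q) mod q" by simp
  with assms show False by (simp add: mod_Suc)
qed

text \<open>For \<open>m\<^sub>1 \<ge> 2\<close> the rows of \<open>J\<^sub>\<M>\<close> have disjoint supports, so \<open>Abar Abar\<^sup>T\<close> acts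
  blockwise.\<close>

lemma blk_supp_le_Abar_tr_Abar:
  assumes m1: "2 \<le> m1" and j: "1 \<le> j" and y: "blk_supp_le q y j K"
  shows "blk_supp_le q (mv nr nc (Abar Lf m1 m2 q) (mv nc nr (tr (Abar Lf m1 m2 q)) y)) j K"
proof (rule blk_supp_le_Abar)
  fix i assume i: "i \<in> {j * m1, j * m1 + 1}"
  show "blk_supp_le q (mv nc nr (tr (Abar Lf m1 m2 q)) y) i K"
  proof (rule blk_supp_le_tr_Abar)
    fix j' assume "i \<in> {j' * m1, j' * m1 + 1}"
    with i m1 have "j' = j"
      using mult_neq_Suc_mult[OF m1] mult_neq_Suc_mult[OF m1, symmetric] by auto
    with y show "blk_supp_le q y j' K" by simp
  qed (use m1 j i in auto)
qed (use m1 j in auto)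

lemma is_prox_gbar_eq_0:
  assumes prox: "is_prox nb eta (gbar beta Lf m nb) xi p" and eta: "0 < eta"
    and weight: "0 \<le> beta / (real m * Lf)" and k: "k \<in> {1..nb}" and xi: "xi k = 0"
  shows "p k = 0"
proof -
  define C where "C = beta / (real m * Lf)"
  define p' where "p' = p(k := 0)"
  have "p \<in> vecs nb" using prox by (simp add: is_prox_def)
  then have "p' \<in> vecs nb" using k by (auto simp: vecs_def p'_def)
  with prox have le: "gbar beta Lf m nb p + (vnorm nb (\<lambda>j. p j - xi j))\<^sup>2 / (2 * eta)
      \<le> gbar beta Lf m nb p' + (vnorm nb (\<lambda>j. p' j - xi j))\<^sup>2 / (2 * eta)"
    by (simp add: is_prox_def)
  have fin: "finite {1..nb}" by simp
  have l1: "(\<Sum>j=1..nb. \<bar>p j\<bar>) = \<bar>p k\<bar> + (\<Sum>j\<in>{1..nb} - {k}. \<bar>p j\<bar>)"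
    "(\<Sum>j=1..nb. \<bar>p' j\<bar>) = (\<Sum>j\<in>{1..nb} - {k}. \<bar>p j\<bar>)"
    using sum.remove[OF fin k, of "\<lambda>j. \<bar>p j\<bar>"] sum.remove[OF fin k, of "\<lambda>j. \<bar>p' j\<bar>"]
    by (simp_all add: p'_def)
  have l2: "(vnorm nb (\<lambda>j. p j - xi j))\<^sup>2 = (p k)\<^sup>2 + (\<Sum>j\<in>{1..nb} - {k}. (p j - xi j)\<^sup>2)"
    "(vnorm nb (\<lambda>j. p' j - xi j))\<^sup>2 = (\<Sum>j\<in>{1..nb} - {k}. (p j - xi j)\<^sup>2)"
    unfolding vnorm_def
    using sum.remove[OF fin k, of "\<lambda>j. (p j - xi j)\<^sup>2"] sum.remove[OF fin k, of "\<lambda>j. (p' j - xi j)\<^sup>2"] xi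
    by (simp_all add: sum_nonneg p'_def)
  from le have "C * \<bar>p k\<bar> + (p k)\<^sup>2 / (2 * eta) \<le> 0"
    unfolding gbar_def C_def[symmetric] l1 l2 by (simp add: distrib_left add_divide_distrib)
  moreover have "0 \<le> C * \<bar>p k\<bar>" using weight by (simp add: C_def[symmetric])
  ultimately have "(p k)\<^sup>2 / (2 * eta) \<le> 0" by linarith
  with eta show ?thesis by (simp add: divide_le_0_iff)
qed

lemma blk_supp_le_is_prox:
  assumes "is_prox nb eta (gbar beta Lf m nb) xi p" "0 < eta" "0 \<le> beta / (real m * Lf)"
    and nb: "nb = N * q" and j: "j \<in> {1..N}" and xi: "blk_supp_le q xi j K"
  shows "blk_supp_le q p j K"
  unfolding blk_supp_le_def
proof (intro allI impI)
  fix jj assume jj: "1 \<le> jj \<and> jj \<le> q \<and> K < jj"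
  have "(j - 1) * q + jj \<le> (j - 1) * q + q" using jj by simp
  also have "\<dots> = j * q" using j by (cases j) auto
  also have "\<dots> \<le> nb" using j nb by simp
  finally have idx: "(j - 1) * q + jj \<in> {1..nb}" using jj by simp
  have "xi ((j - 1) * q + jj) = 0" using xi jj by (simp add: blk_supp_le_def)
  then show "p ((j - 1) * q + jj) = 0" by (rule is_prox_gbar_eq_0[OF assms(1-3) idx])
qed

lemma opnorm_nonneg: "0 \<le> opnorm nr nc M"
proof -
  let ?S = "{vnorm nr (mv nr nc M x) | x. x \<in> vecs nc \<and> vnorm nc x \<le> 1}"
  have "vnorm n zvec = 0" for n by (simp add: vnorm_def zvec_def)
  moreover have "zvec \<in> vecs nc" by (simp add: vecs_def zvec_def)
  ultimately have zero: "0 \<in> ?S" by force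
  have "v \<le> (\<Sum>r=1..nr. \<Sum>c=1..nc. \<bar>M r c\<bar>)" if "v \<in> ?S" for v
  proof -
    obtain x where x: "vnorm nc x \<le> 1" and v: "v = vnorm nr (mv nr nc M x)"
      using \<open>v \<in> ?S\<close> by blast
    have "\<bar>x c\<bar> \<le> 1" if "c \<in> {1..nc}" for c
    proof -
      have "sqrt ((x c)\<^sup>2) \<le> vnorm nc x"
        unfolding vnorm_def using that by (intro real_sqrt_le_mono member_le_sum) auto
      with x show ?thesis by simp
    qed
    then have "\<bar>mv nr nc M x r\<bar> \<le> (\<Sum>c=1..nc. \<bar>M r c\<bar>)" if "r \<in> {1..nr}" for r
      using that unfolding mv_def
      by (auto intro!: order.trans[OF sum_abs] sum_mono simp: abs_mult mult_left_le)
    moreover have "v \<le> (\<Sum>r=1..nr. \<bar>mv nr nc M x r\<bar>)"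
      unfolding v vnorm_def using L2_set_le_sum_abs[of "mv nr nc M x" "{1..nr}"]
      by (simp add: L2_set_def)
    ultimately show ?thesis by (meson order.trans sum_mono)
  qed
  then have "bdd_above ?S" by (rule bdd_aboveI)
  with zero show ?thesis unfolding opnorm_def by (rule cSup_upper)
qed

text \<open>With \<open>n = m/3\<close>: for odd \<open>K\<close> the coordinate \<open>K + 1\<close> can appear in blocks \<open>1..n\<close>
  at time \<open>2 + n(K - 1)\<close> and then travels one block per iteration, reaching block \<open>i\<close>
  after \<open>i - n\<close> more steps; for even \<open>K\<close> it starts from blocks \<open>2n+1..3n\<close>. Truncated
  subtraction makes the distance vanish inside the creating third.\<close>

definition level_time :: "nat \<Rightarrow> nat \<Rightarrow> nat \<Rightarrow> nat" where
  "level_time n K i =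
     (if K = 0 then 0 else 1 + n * (K - 1) + (if odd K then i - n else 2 * n + 1 - i))"

lemma level_time_ge: "1 \<le> K \<Longrightarrow> 1 + n * (K - 1) \<le> level_time n K i"
  by (simp add: level_time_def)

lemma level_time_neighbour: "i \<le> i' + 1 \<Longrightarrow> i' \<le> i + 1 \<Longrightarrow> level_time n K i \<le> level_time n K i' + 1"
  by (auto simp: level_time_def)

lemma level_time_link:
  assumes K: "1 \<le> K" and link: "has_link m i (Suc K)"
  shows "level_time (m div 3) K i \<le> level_time (m div 3) (K - 1) i + 1"
proof (cases "K = 1")
  case True
  with link show ?thesis by (simp add: level_time_def has_link_def)
next
  case False
  with K obtain k where k: "K = Suc (Suc k)" by (metis One_nat_def Suc_le_D le_SucE le_zero_eq)
  have "m div 3 \<le> 2 * m div 3" by (simp add: div_le_mono)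
  with link show ?thesis unfolding level_time_def has_link_def k by auto
qed

locale class2_iteration =
  fixes eps Lf beta :: real
    and m1 m2 m dbar d nbar nA :: nat
    and x y :: "nat \<Rightarrow> nat \<Rightarrow> real"
  assumes m1: "2 \<le> m1" and m_def: "m = 3 * m1 * m2"
    and d_def: "d = m * dbar" and nbar_def: "nbar = (3 * m2 - 1) * dbar"
    and gbar_weight: "0 \<le> beta / (real m * Lf)"
    and x0: "x 0 = zvec" and y0: "y 0 = zvec"
    and xstep: "\<And>t. 1 \<le> t \<Longrightarrow> x t \<in> lspan (\<Union>s<t.
        {x s,
         grad d (f0 eps Lf m dbar) (x s),
         mv d nA (tr (Amat Lf m1 m2 dbar)) zvec,
         mv d nA (tr (Amat Lf m1 m2 dbar)) (mv nA d (Amat Lf m1 m2 dbar) (x s)),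
         mv d nbar (tr (Abar Lf m1 m2 dbar)) zvec,
         mv d nbar (tr (Abar Lf m1 m2 dbar)) (mv nbar d (Abar Lf m1 m2 dbar) (x s)),
         mv d nbar (tr (Abar Lf m1 m2 dbar)) (y s)})"
    and ystep: "\<And>t. 1 \<le> t \<Longrightarrow> \<exists>eta > 0. \<exists>xi p.
        xi \<in> lspan (\<Union>s<t.
          {zvec,
           y s,
           mv nbar d (Abar Lf m1 m2 dbar) (mv d nbar (tr (Abar Lf m1 m2 dbar)) (y s)),
           mv nbar d (Abar Lf m1 m2 dbar) (x s)})
        \<and> is_prox nbar eta (gbar beta Lf m nbar) xi p
        \<and> y t \<in> lspan {xi, p}"
begin

lemma x_level_step:
  assumes t: "1 \<le> t"
    and IHx: "\<And>s i K. s < t \<Longrightarrow> i \<in> {1..m} \<Longrightarrow> s \<le> level_time (m div 3) K i \<Longrightarrow>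
        blk_supp_le dbar (x s) i K"
    and IHy: "\<And>s j K. s < t \<Longrightarrow> j \<in> {1..3 * m2 - 1} \<Longrightarrow>
        (\<And>i. i \<in> {j * m1, j * m1 + 1} \<Longrightarrow> s \<le> level_time (m div 3) K i) \<Longrightarrow>
        blk_supp_le dbar (y s) j K"
    and i: "i \<in> {1..m}" and tK: "t \<le> level_time (m div 3) K i"
  shows "blk_supp_le dbar (x t) i K"
proof -
  have K: "1 \<le> K" using t tK by (cases K) (auto simp: level_time_def)
  have xs: "blk_supp_le dbar (x s) i K" if "s < t" for s
    by (rule IHx[OF that i]) (use that tK in linarith)
  have near: "blk_supp_le dbar (x s) i' K"
    if "s < t" "i' \<in> {1..m}" "i' \<le> i + 1" "i \<le> i' + 1" for s i'
    by (rule IHx[OF that(1,2)])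
      (use level_time_neighbour[OF that(4,3), of "m div 3" K] that(1) tK in linarith)
  have ys: "blk_supp_le dbar (y s) j K"
    if s: "s < t" and j: "j \<in> {1..3 * m2 - 1}" and ij: "i \<in> {j * m1, j * m1 + 1}" for s j
  proof (rule IHy[OF s j])
    fix i' assume "i' \<in> {j * m1, j * m1 + 1}"
    with ij have "i \<le> i' + 1" "i' \<le> i + 1" by auto
    then show "s \<le> level_time (m div 3) K i'"
      using level_time_neighbour[of i i' "m div 3" K] s tK by linarith
  qed
  have grad: "blk_supp_le dbar (grad d (f0 eps Lf m dbar) (x s)) i K" if s: "s < t" for s
  proof (rule blk_supp_le_grad_f0[OF d_def i K xs[OF s]])
    show "blk_supp_le dbar (x s) i (K - 1)" if "has_link m i (Suc K)"
      by (rule IHx[OF s i]) (use level_time_link[OF K that] s tK in linarith)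
  qed
  have AtA: "blk_supp_le dbar (mv d nA (tr (Amat Lf m1 m2 dbar)) (mv nA d (Amat Lf m1 m2 dbar) (x s))) i K"
    if "s < t" for s
    unfolding Amat_def by (rule blk_supp_le_kronI_Jmat_gram) (use i near[OF that] m_def in auto)
  have AbtAb: "blk_supp_le dbar (mv d nbar (tr (Abar Lf m1 m2 dbar)) (mv nbar d (Abar Lf m1 m2 dbar) (x s))) i K"
    if "s < t" for s
    unfolding Abar_def by (rule blk_supp_le_kronI_Jmat_gram) (use i near[OF that] m_def in auto)
  have Abt: "blk_supp_le dbar (mv d nbar (tr (Abar Lf m1 m2 dbar)) (y s)) i K" if "s < t" for s
    by (rule blk_supp_le_tr_Abar) (use m1 i ys[OF that] in auto)
  show ?thesis
    by (rule blk_supp_le_lspan[OF xstep[OF t]], elim UN_E insertE emptyE)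
      (simp_all add: xs grad AtA AbtAb Abt)
qed

lemma y_level_step:
  assumes t: "1 \<le> t"
    and IHx: "\<And>s i K. s < t \<Longrightarrow> i \<in> {1..m} \<Longrightarrow> s \<le> level_time (m div 3) K i \<Longrightarrow>
        blk_supp_le dbar (x s) i K"
    and IHy: "\<And>s j K. s < t \<Longrightarrow> j \<in> {1..3 * m2 - 1} \<Longrightarrow>
        (\<And>i. i \<in> {j * m1, j * m1 + 1} \<Longrightarrow> s \<le> level_time (m div 3) K i) \<Longrightarrow>
        blk_supp_le dbar (y s) j K"
    and j: "j \<in> {1..3 * m2 - 1}" and tK: "\<And>i. i \<in> {j * m1, j * m1 + 1} \<Longrightarrow> t \<le> level_time (m div 3) K i"
  shows "blk_supp_le dbar (y t) j K"
proof -
  obtain eta xi p where eta: "0 < eta"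
    and xi: "xi \<in> lspan (\<Union>s<t. {zvec, y s,
        mv nbar d (Abar Lf m1 m2 dbar) (mv d nbar (tr (Abar Lf m1 m2 dbar)) (y s)),
        mv nbar d (Abar Lf m1 m2 dbar) (x s)})"
    and prox: "is_prox nbar eta (gbar beta Lf m nbar) xi p" and yt: "y t \<in> lspan {xi, p}"
    using ystep[OF t] by blast
  have "1 \<le> m2" using j by auto
  then have m1_le: "m1 \<le> m" by (simp add: m_def)
  have "j * m1 \<le> (3 * m2 - 1) * m1" using j by simp
  also have "\<dots> = m - m1" by (simp add: m_def diff_mult_distrib algebra_simps)
  finally have blocks: "i \<in> {1..m}" if "i \<in> {j * m1, j * m1 + 1}" for i
    using that j m1 m1_le by auto
  have ys: "blk_supp_le dbar (y s) j K" if "s < t" for s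
    using IHy[OF that j] tK that by (meson less_imp_le_nat order.trans)
  have xs: "blk_supp_le dbar (x s) i K" if "s < t" "i \<in> {j * m1, j * m1 + 1}" for s i
    by (rule IHx[OF that(1) blocks[OF that(2)]]) (use tK[OF that(2)] that(1) in linarith)
  have AAt: "blk_supp_le dbar (mv nbar d (Abar Lf m1 m2 dbar) (mv d nbar (tr (Abar Lf m1 m2 dbar)) (y s))) j K"
    if "s < t" for s
    using blk_supp_le_Abar_tr_Abar[OF m1 _ ys[OF that]] j by simp
  have Ax: "blk_supp_le dbar (mv nbar d (Abar Lf m1 m2 dbar) (x s)) j K" if "s < t" for s
    using blk_supp_le_Abar[OF _ _ xs[OF that]] m1 j by simp
  have xi_level: "blk_supp_le dbar xi j K"
    by (rule blk_supp_le_lspan[OF xi], elim UN_E insertE emptyE) (simp_all add: ys AAt Ax)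
  moreover have "blk_supp_le dbar p j K"
    by (rule blk_supp_le_is_prox[OF prox eta gbar_weight nbar_def j xi_level])
  ultimately show ?thesis
    using blk_supp_le_lspan[OF yt] by blast
qed

text \<open>Row \<open>j\<close> of \<open>J\<^sub>\<M>\<close> links x-blocks \<open>j m\<^sub>1\<close> and \<open>j m\<^sub>1 + 1\<close>, so y-block \<open>j\<close> inherits the
  earlier of their two deadlines.\<close>

lemma level_invariant:
  "(\<forall>i K. i \<in> {1..m} \<and> t \<le> level_time (m div 3) K i \<longrightarrow> blk_supp_le dbar (x t) i K) \<and>
   (\<forall>j K. j \<in> {1..3 * m2 - 1} \<and> (\<forall>i \<in> {j * m1, j * m1 + 1}. t \<le> level_time (m div 3) K i) \<longrightarrow>
      blk_supp_le dbar (y t) j K)"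
proof (induction t rule: less_induct)
  case (less t)
  show ?case
  proof (cases "t = 0")
    case True
    then show ?thesis by (simp add: x0 y0)
  next
    case False
    then have t: "1 \<le> t" by simp
    have IHx: "\<And>s i K. s < t \<Longrightarrow> i \<in> {1..m} \<Longrightarrow> s \<le> level_time (m div 3) K i \<Longrightarrow>
        blk_supp_le dbar (x s) i K"
      using less.IH by blast
    have IHy: "\<And>s j K. s < t \<Longrightarrow> j \<in> {1..3 * m2 - 1} \<Longrightarrow>
        (\<And>i. i \<in> {j * m1, j * m1 + 1} \<Longrightarrow> s \<le> level_time (m div 3) K i) \<Longrightarrow>
        blk_supp_le dbar (y s) j K"
      using less.IH by blast
    show ?thesis
      using x_level_step[OF t IHx IHy] y_level_step[OF t IHx IHy] by blast
  qed
qed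

lemma supp_blk_iterates:
  assumes jb: "jb \<in> {2..dbar}" and t: "real t \<le> 1 + real m * (real jb - 2) / 3"
  shows "(\<forall>i \<in> {1..m}. supp (blk dbar (x t) i) \<subseteq> {1..jb - 1}) \<and>
    (\<forall>j \<in> {1..3 * m2 - 1}. supp (blk dbar (y t) j) \<subseteq> {1..jb - 1})"
proof -
  have "real m * (real jb - 2) / 3 = real (m div 3 * (jb - 1 - 1))"
    using jb by (simp add: m_def of_nat_diff)
  with t have "real t \<le> real (1 + m div 3 * (jb - 1 - 1))" by simp
  moreover have "1 + m div 3 * (jb - 1 - 1) \<le> level_time (m div 3) (jb - 1) i" for i
    by (rule level_time_ge) (use jb in auto)
  ultimately have "t \<le> level_time (m div 3) (jb - 1) i" for i
    by (meson of_nat_le_iff order.trans)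
  then show ?thesis
    using level_invariant[of t] unfolding supp_blk_subset_iff by auto
qed

end

theorem proposition4:
  fixes eps Lf beta :: real
    and m1 m2 m dbar d nbar nA :: nat
    and x y :: "nat \<Rightarrow> nat \<Rightarrow> real"
  assumes eps: "0 < eps" "eps < 1"
    and Lf: "0 < Lf"
    and m1: "2 \<le> m1" and m2: "1 \<le> m2" and ev: "even (m1 * m2)"
    and m_def: "m = 3 * m1 * m2"
    and dbar: "odd dbar" "5 \<le> dbar"
    and d_def: "d = m * dbar"
    and nbar_def: "nbar = (3 * m2 - 1) * dbar"
    and nA_def: "nA = card (McSet m1 m2) * dbar"
    and beta: "beta > (50 * pi + 1 + opnorm nA d (Amat Lf m1 m2 dbar)) * sqrt (real m) * eps"
    and x0: "x 0 = zvec" and y0: "y 0 = zvec"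
    and xstep: "\<And>t. 1 \<le> t \<Longrightarrow> x t \<in> lspan (\<Union>s<t.
        {x s,
         grad d (f0 eps Lf m dbar) (x s),
         mv d nA (tr (Amat Lf m1 m2 dbar)) zvec,
         mv d nA (tr (Amat Lf m1 m2 dbar)) (mv nA d (Amat Lf m1 m2 dbar) (x s)),
         mv d nbar (tr (Abar Lf m1 m2 dbar)) zvec,
         mv d nbar (tr (Abar Lf m1 m2 dbar)) (mv nbar d (Abar Lf m1 m2 dbar) (x s)),
         mv d nbar (tr (Abar Lf m1 m2 dbar)) (y s)})"
    and ystep: "\<And>t. 1 \<le> t \<Longrightarrow> \<exists>eta > 0. \<exists>xi p.
        xi \<in> lspan (\<Union>s<t.
          {zvec,
           y s,
           mv nbar d (Abar Lf m1 m2 dbar) (mv d nbar (tr (Abar Lf m1 m2 dbar)) (y s)),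
           mv nbar d (Abar Lf m1 m2 dbar) (x s)})
        \<and> is_prox nbar eta (gbar beta Lf m nbar) xi p
        \<and> y t \<in> lspan {xi, p}"
  shows "\<forall>jb \<in> {2..dbar}. \<forall>t. real t \<le> 1 + real m * (real jb - 2) / 3 \<longrightarrow>
           (\<forall>i \<in> {1..m}. supp (blk dbar (x t) i) \<subseteq> {1..jb - 1}) \<and>
           (\<forall>j \<in> {1..3 * m2 - 1}. supp (blk dbar (y t) j) \<subseteq> {1..jb - 1})"
proof -
  txt \<open>Of the hypotheses on the parameters only the sign of \<open>beta\<close> matters.\<close>
  have "0 \<le> (50 * pi + 1 + opnorm nA d (Amat Lf m1 m2 dbar)) * sqrt (real m) * eps"
    using opnorm_nonneg[of nA d "Amat Lf m1 m2 dbar"] pi_gt_zero eps by simp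
  with beta Lf have weight: "0 \<le> beta / (real m * Lf)" by simp
  interpret class2_iteration eps Lf beta m1 m2 m dbar d nbar nA x y
    by unfold_locales (fact m1 m_def d_def nbar_def weight x0 y0 xstep ystep)+
  show ?thesis using supp_blk_iterates by blast
qed

end
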